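(* Let $K\ge 3$, let $m_1<\cdots<m_K$ be pairwise co-prime positive integers with $m_1\ge 3$, let $M$ be a positive integer, $M_k=Mm_k$, $\Gamma=\prod_{k=1}^K m_k$, and $d=\min_{I\subseteq\{1,\ldots,K\}}\{\prod_{i\in I}m_i+\prod_{i\notin I}m_i\}$ (empty product $=1$). Let $\{N_1,N_2\}$ and $\{N_1',N_2'\}$ be two $2$-sets of nonnegative integers such that $\{\langle N_1\rangle_{M_k},\langle N_2\rangle_{M_k}\}=\{\langle N_1'\rangle_{M_k},\langle N_2'\rangle_{M_k}\}$ for every $k=1,\ldots,K$. (1) If $\langle N_1\rangle_M\neq\langle N_2\rangle_M$ and $N_1,N_2,N_1',N_2'<M\Gamma$, then $\{N_1,N_2\}=\{N_1',N_2'\}$. (2) If $\langle N_1\rangle_M=\langle N_2\rangle_M$ and $N_1,N_2,N_1',N_2'<Md$, then $\{N_1,N_2\}=\{N_1',N_2'\}$. That is, in case (1) any two distinct nonnegative integers below $M\Gamma$ with distinct remainders modulo $M$, and in case (2) any two distinct nonnegative integers below $Md$ with equal remainders modulo $M$, are uniquely determined by their unordered residue sets modulo $M_1,\ldots,M_K$.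
   Context: For a positive integer $n$ and an integer $x$, $\langle x\rangle_n$ denotes the remainder of $x$ modulo $n$, in $\{0,\ldots,n-1\}$. A $2$-set is a set with exactly two elements; residue sets $\{\langle N_1\rangle_{M_k},\langle N_2\rangle_{M_k}\}$ are unordered sets (repetitions collapse). *)

theory Defs
  imports Main
begin

definition split_min :: "(nat \<Rightarrow> nat) \<Rightarrow> nat \<Rightarrow> nat" where
  "split_min m K = Min {(\<Prod>i\<in>I. m i) + (\<Prod>i\<in>{1..K} - I. m i) | I. I \<subseteq> {1..K}}"

end

theory Submission
  imports Defs "HOL-Number_Theory.Cong"
begin

text \<open>
  Two numbers with equal residues modulo every \<open>M m\<^sub>k\<close> are congruent modulo \<open>M \<Gamma>\<close>,
  by the Chinese remainder theorem. If the residues modulo \<open>M\<close> differ, they decide at every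
  \<open>k\<close> which element of one pair matches which element of the other, and the consistent matching
  pins both numbers down below \<open>M \<Gamma>\<close>.

  If all four residues modulo \<open>M\<close> agree, dividing by \<open>M\<close> reduces to \<open>M = 1\<close>. Then
  \<open>x + y \<equiv> x' + y'\<close> modulo every \<open>m\<^sub>k\<close>, hence \<open>x + y = x' + y'\<close> since \<open>2 d \<le> \<Gamma>\<close>. Let \<open>I\<close> be
  the set of \<open>k\<close> at which \<open>x \<equiv> x'\<close>; on its complement \<open>x \<equiv> y'\<close>. Unless \<open>x \<in> {x', y'}\<close>,
  this forces \<open>|x - x'| + |x - y'| \<ge> \<Prod>\<^sub>I m + \<Prod>\<^sub>I\<^sup>c m \<ge> d\<close>, which is impossible for four numbers
  below \<open>d\<close> with \<open>x + y = x' + y'\<close>.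
\<close>

lemma cong_nat_imp_le_dist:
  fixes a b n :: nat
  assumes "[a = b] (mod n)" and "a \<noteq> b"
  shows "int n \<le> \<bar>int a - int b\<bar>"
proof -
  have "int n dvd int a - int b"
    using assms(1) by (simp add: cong_iff_dvd_diff flip: cong_int_iff)
  then show ?thesis
    using assms(2) by (metis abs_of_nat dvd_imp_le_int eq_iff_diff_eq_0 of_nat_eq_iff)
qed

lemma cong_mult_prod_coprime_nat:
  fixes x y M :: nat and m :: "'a \<Rightarrow> nat"
  assumes "M > 0" and "a \<in> A"
    and cong: "\<forall>k\<in>A. [x = y] (mod M * m k)"
    and coprime: "\<forall>i\<in>A. \<forall>j\<in>A. i \<noteq> j \<longrightarrow> coprime (m i) (m j)"
  shows "[x = y] (mod M * prod m A)"
proof -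
  have mod_M: "x mod M = y mod M"
    using cong assms(2) cong_modulus_mult_nat unfolding cong_def by blast
  have "[x div M = y div M] (mod m k)" if "k \<in> A" for k
    using cong that mod_M \<open>M > 0\<close> by (simp add: cong_def mod_mult2_eq)
  then have "[x div M = y div M] (mod prod m A)"
    using coprime by (intro cong_cong_prod_coprime_nat) auto
  then show ?thesis
    using mod_M by (simp add: cong_def mod_mult2_eq)
qed

lemma doubleton_mod_mult_imp_mod:
  fixes x y x' y' M c :: nat
  assumes "{x mod (M * c), y mod (M * c)} = {x' mod (M * c), y' mod (M * c)}"
  shows "{x mod M, y mod M} = {x' mod M, y' mod M}"
proof -
  have "(\<lambda>z. z mod M) ` {x mod (M * c), y mod (M * c)} =
        (\<lambda>z. z mod M) ` {x' mod (M * c), y' mod (M * c)}"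
    using assms by simp
  then show ?thesis
    by (simp add: mod_mod_cancel)
qed

lemma doubleton_mod_mult_iff_div:
  fixes x y x' y' M c r :: nat
  assumes "M > 0" and "x mod M = r" "y mod M = r" "x' mod M = r" "y' mod M = r"
  shows "{x mod (M * c), y mod (M * c)} = {x' mod (M * c), y' mod (M * c)} \<longleftrightarrow>
         {x div M mod c, y div M mod c} = {x' div M mod c, y' div M mod c}"
proof -
  define f where "f t = M * t + r" for t
  have inj: "inj f"
    using assms(1) by (auto simp: f_def inj_on_def)
  have lift: "z mod (M * c) = f (z div M mod c)" if "z mod M = r" for z
    using that by (simp add: f_def mod_mult2_eq)
  show ?thesis
    using inj_image_eq_iff[OF inj, of "{x div M mod c, y div M mod c}" "{x' div M mod c, y' div M mod c}"]
    by (simp add: lift assms(2-5))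
qed

lemma residue_doubletons_sum_eq:
  fixes x y x' y' :: nat and m :: "'a \<Rightarrow> nat"
  assumes coprime: "\<forall>i\<in>A. \<forall>j\<in>A. i \<noteq> j \<longrightarrow> coprime (m i) (m j)"
    and res: "\<forall>k\<in>A. {x mod m k, y mod m k} = {x' mod m k, y' mod m k}"
    and "x + y < prod m A" "x' + y' < prod m A"
  shows "x + y = x' + y'"
proof -
  have "[x + y = x' + y'] (mod m k)" if "k \<in> A" for k
  proof -
    have "[x = x'] (mod m k) \<and> [y = y'] (mod m k) \<or> [x = y'] (mod m k) \<and> [y = x'] (mod m k)"
      using res that by (auto simp: cong_def doubleton_eq_iff)
    then show ?thesis
      by (metis add.commute cong_add)
  qed
  then have "[x + y = x' + y'] (mod prod m A)"
    using coprime by (intro cong_cong_prod_coprime_nat) auto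
  then show ?thesis
    using assms(3,4) cong_less_modulus_unique_nat by blast
qed

lemma residue_doubletons_eq:
  fixes x y x' y' d :: nat and m :: "'a \<Rightarrow> nat"
  assumes coprime: "\<forall>i\<in>A. \<forall>j\<in>A. i \<noteq> j \<longrightarrow> coprime (m i) (m j)"
    and split: "\<forall>I\<subseteq>A. d \<le> prod m I + prod m (A - I)"
    and twice: "2 * d \<le> prod m A"
    and lt: "x < d" "y < d" "x' < d" "y' < d"
    and res: "\<forall>k\<in>A. {x mod m k, y mod m k} = {x' mod m k, y' mod m k}"
  shows "{x, y} = {x', y'}"
proof -
  have sum: "x + y = x' + y'"
    using residue_doubletons_sum_eq[OF coprime res] lt twice by linarith
  define I where "I = {k \<in> A. [x = x'] (mod m k)}"
  have cong_I: "[x = x'] (mod prod m I)"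
    using coprime by (intro cong_cong_prod_coprime_nat) (auto simp: I_def)
  have "[x = y'] (mod m k)" if "k \<in> A - I" for k
    using res that by (auto simp: I_def cong_def doubleton_eq_iff)
  then have cong_rest: "[x = y'] (mod prod m (A - I))"
    using coprime by (intro cong_cong_prod_coprime_nat) auto
  have "d \<le> prod m I + prod m (A - I)"
    using split by (auto simp: I_def)
  then have "x = x' \<or> x = y'"
    using cong_nat_imp_le_dist[OF cong_I] cong_nat_imp_le_dist[OF cong_rest] lt sum by arith
  then show ?thesis
    using sum by auto
qed

lemma residue_doubletons_eq_distinct_mod:
  fixes x y x' y' M :: nat and m :: "'a \<Rightarrow> nat"
  assumes "M > 0" and "a \<in> A"
    and coprime: "\<forall>i\<in>A. \<forall>j\<in>A. i \<noteq> j \<longrightarrow> coprime (m i) (m j)"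
    and distinct: "x mod M \<noteq> y mod M"
    and lt: "x < M * prod m A" "y < M * prod m A" "x' < M * prod m A" "y' < M * prod m A"
    and res: "\<forall>k\<in>A. {x mod (M * m k), y mod (M * m k)} = {x' mod (M * m k), y' mod (M * m k)}"
  shows "{x, y} = {x', y'}"
proof -
  have matched: "x = u \<and> y = v"
    if uv: "{u, v} = {x', y'}" and "x mod M = u mod M" "y mod M = v mod M" for u v
  proof -
    have "[x = u] (mod M * m k) \<and> [y = v] (mod M * m k)" if "k \<in> A" for k
    proof -
      have "{x mod (M * m k), y mod (M * m k)} = {u mod (M * m k), v mod (M * m k)}"
        using res that uv by auto
      moreover have "x mod (M * m k) \<noteq> v mod (M * m k)" "y mod (M * m k) \<noteq> u mod (M * m k)"
        using distinct \<open>x mod M = u mod M\<close> \<open>y mod M = v mod M\<close>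
        by (metis dvd_triv_left mod_mod_cancel)+
      ultimately show ?thesis
        by (auto simp: cong_def doubleton_eq_iff)
    qed
    then have "[x = u] (mod M * prod m A)" "[y = v] (mod M * prod m A)"
      using cong_mult_prod_coprime_nat[OF \<open>M > 0\<close> \<open>a \<in> A\<close> _ coprime] by auto
    moreover have "u < M * prod m A" "v < M * prod m A"
      using uv lt by (auto simp: doubleton_eq_iff)
    ultimately show ?thesis
      using lt cong_less_modulus_unique_nat by blast
  qed
  have "{x mod M, y mod M} = {x' mod M, y' mod M}"
    using res \<open>a \<in> A\<close> doubleton_mod_mult_imp_mod by blast
  then show ?thesis
    using matched[of x' y'] matched[of y' x'] by (auto simp: doubleton_eq_iff insert_commute)
qed

lemma residue_doubletons_eq_same_mod:
  fixes x y x' y' M d :: nat and m :: "'a \<Rightarrow> nat"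
  assumes "a \<in> A" and "M > 0"
    and coprime: "\<forall>i\<in>A. \<forall>j\<in>A. i \<noteq> j \<longrightarrow> coprime (m i) (m j)"
    and split: "\<forall>I\<subseteq>A. d \<le> prod m I + prod m (A - I)"
    and twice: "2 * d \<le> prod m A"
    and same: "x mod M = y mod M"
    and lt: "x < M * d" "y < M * d" "x' < M * d" "y' < M * d"
    and res: "\<forall>k\<in>A. {x mod (M * m k), y mod (M * m k)} = {x' mod (M * m k), y' mod (M * m k)}"
  shows "{x, y} = {x', y'}"
proof -
  define r where "r = x mod M"
  have "{x mod M, y mod M} = {x' mod M, y' mod M}"
    using res \<open>a \<in> A\<close> doubleton_mod_mult_imp_mod by blast
  then have r: "x mod M = r" "y mod M = r" "x' mod M = r" "y' mod M = r"
    using same by (auto simp: r_def doubleton_eq_iff)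
  have "\<forall>k\<in>A. {x div M mod m k, y div M mod m k} = {x' div M mod m k, y' div M mod m k}"
    using res doubleton_mod_mult_iff_div[OF \<open>M > 0\<close> r] by blast
  moreover have "x div M < d" "y div M < d" "x' div M < d" "y' div M < d"
    using lt by (simp_all add: less_mult_imp_div_less mult.commute)
  ultimately have "{x div M, y div M} = {x' div M, y' div M}"
    using residue_doubletons_eq[OF coprime split twice] by blast
  then have "(\<lambda>t. M * t + r) ` {x div M, y div M} = (\<lambda>t. M * t + r) ` {x' div M, y' div M}"
    by simp
  moreover have "M * (z div M) + r = z" if "z mod M = r" for z
    using that mult_div_mod_eq by blast
  ultimately show ?thesis
    using r by simp
qed

lemma split_min_le:
  assumes "I \<subseteq> {1..K}"
  shows "split_min m K \<le> prod m I + prod m ({1..K} - I)"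
  unfolding split_min_def using assms by (intro Min_le) auto

lemma two_split_min_le_prod:
  fixes m :: "nat \<Rightarrow> nat"
  assumes "K \<ge> 3" and "m 1 \<ge> 3" "m 1 \<le> m 2" "m 1 \<le> m 3"
    and pos: "\<And>i. 1 \<le> i \<Longrightarrow> i \<le> K \<Longrightarrow> m i > 0"
  shows "2 * split_min m K \<le> prod m {1..K}"
proof -
  define P where "P = prod m ({1..K} - {1})"
  define Q where "Q = prod m ({1..K} - {1} - {2, 3})"
  have "P = Q * (m 2 * m 3)"
    using assms(1) prod.subset_diff[of "{2, 3}" "{1..K} - {1}" m] by (simp add: P_def Q_def)
  moreover have "Q \<ge> 1"
    using pos by (simp add: Q_def Suc_le_eq prod_pos)
  ultimately have "P \<ge> m 2 * m 3"
    by simp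
  moreover have "3 * m 1 \<le> m 1 * m 1"
    using assms(2) by simp
  moreover have "m 1 * m 1 \<le> m 2 * m 3"
    using assms(3,4) by (rule mult_le_mono)
  moreover have "split_min m K \<le> m 1 + P"
    using split_min_le[of "{1}" K m] assms(1) by (simp add: P_def)
  moreover have "prod m {1..K} = m 1 * P"
    using assms(1) by (simp add: P_def prod.remove)
  moreover have "m 1 * P \<ge> 3 * P"
    using assms(2) by simp
  ultimately show ?thesis
    by linarith
qed

theorem corollary1:
  fixes K M :: nat and m :: "nat \<Rightarrow> nat" and N1 N2 N1' N2' :: nat
  assumes K3: "K \<ge> 3"
    and incr: "\<And>i j. 1 \<le> i \<Longrightarrow> i < j \<Longrightarrow> j \<le> K \<Longrightarrow> m i < m j"
    and pos: "\<And>i. 1 \<le> i \<Longrightarrow> i \<le> K \<Longrightarrow> m i > 0"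
    and copr: "\<And>i j. 1 \<le> i \<Longrightarrow> i \<le> K \<Longrightarrow> 1 \<le> j \<Longrightarrow> j \<le> K \<Longrightarrow> i \<noteq> j \<Longrightarrow> coprime (m i) (m j)"
    and m1: "m 1 \<ge> 3"
    and Mpos: "M > 0"
    and two: "N1 \<noteq> N2" "N1' \<noteq> N2'"
    and res: "\<And>k. 1 \<le> k \<Longrightarrow> k \<le> K \<Longrightarrow>
       {N1 mod (M * m k), N2 mod (M * m k)} = {N1' mod (M * m k), N2' mod (M * m k)}"
  shows "(N1 mod M \<noteq> N2 mod M \<and>
           N1 < M * (\<Prod>k=1..K. m k) \<and> N2 < M * (\<Prod>k=1..K. m k) \<and>
           N1' < M * (\<Prod>k=1..K. m k) \<and> N2' < M * (\<Prod>k=1..K. m k)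
           \<longrightarrow> {N1, N2} = {N1', N2'})
       \<and> (N1 mod M = N2 mod M \<and>
           N1 < M * split_min m K \<and> N2 < M * split_min m K \<and>
           N1' < M * split_min m K \<and> N2' < M * split_min m K
           \<longrightarrow> {N1, N2} = {N1', N2'})"
proof -
  have one: "1 \<in> {1..K}"
    using K3 by simp
  have coprime: "\<forall>i\<in>{1..K}. \<forall>j\<in>{1..K}. i \<noteq> j \<longrightarrow> coprime (m i) (m j)"
    using copr by auto
  have residues: "\<forall>k\<in>{1..K}. {N1 mod (M * m k), N2 mod (M * m k)} = {N1' mod (M * m k), N2' mod (M * m k)}"
    using res by auto
  have split: "\<forall>I\<subseteq>{1..K}. split_min m K \<le> prod m I + prod m ({1..K} - I)"
    using split_min_le by blast
  have twice: "2 * split_min m K \<le> prod m {1..K}"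
    using K3 m1 pos incr[of 1 2] incr[of 1 3] by (intro two_split_min_le_prod) auto
  show ?thesis
    using residue_doubletons_eq_distinct_mod[OF Mpos one coprime _ _ _ _ _ residues]
      residue_doubletons_eq_same_mod[OF one Mpos coprime split twice _ _ _ _ _ residues]
    by blast
qed

end
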